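(* Let $b\in\mathcal E_1$ with $b-1$ flat at $0$, let $\theta$ be the inverse germ of $t\mapsto t\,b(t)$, and let $\sigma(x)=\theta(x)^4$ with iterates $\sigma^n$ ($\sigma^0=\mathrm{id}$). There exists $\varepsilon>0$ such that for any smooth $\alpha$ with $\alpha(0)=\alpha'(0)=0$ and any $C^1$ function $\lambda$ with $\lambda(0)=\lambda'(0)=0$ (both defined on $(-\varepsilon,\varepsilon)$), setting $$u_n(x)=\alpha(x)\,\alpha(\sigma(x))\,\alpha(\sigma^2(x))\cdots\alpha(\sigma^n(x))\,\lambda(\sigma^{n+1}(x)),$$ (i) the series $\sum_{n=0}^{\infty}u_n(x)$ converges pointwise on $|x|<\varepsilon$, and (ii) its sum is of class $C^1$.
   Context: $\mathcal E_1$ denotes the ring of smooth function germs at $0\in\mathbb R$. A germ is flat at $0$ if all its derivatives (including its value) vanish at $0$. *)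

theory Defs
  imports "HOL-Analysis.Analysis"
begin

definition smooth_on :: "real set \<Rightarrow> (real \<Rightarrow> real) \<Rightarrow> bool" where
  "smooth_on S f \<longleftrightarrow> (\<forall>n. (deriv ^^ n) f differentiable_on S)"

definition C1_on :: "real set \<Rightarrow> (real \<Rightarrow> real) \<Rightarrow> bool" where
  "C1_on S f \<longleftrightarrow> f differentiable_on S \<and> continuous_on S (deriv f)"

definition smooth_germ :: "(real \<Rightarrow> real) \<Rightarrow> bool" where
  "smooth_germ f \<longleftrightarrow> (\<exists>r>0. smooth_on {-r<..<r} f)"

definition flat_at_0 :: "(real \<Rightarrow> real) \<Rightarrow> bool" where
  "flat_at_0 f \<longleftrightarrow> (\<forall>n. (deriv ^^ n) f 0 = 0)"

definition inverse_germ :: "(real \<Rightarrow> real) \<Rightarrow> (real \<Rightarrow> real) \<Rightarrow> bool" where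
  "inverse_germ \<theta> \<phi> \<longleftrightarrow> \<theta> 0 = 0 \<and> isCont \<theta> 0 \<and>
     (\<forall>\<^sub>F x in nhds 0. \<theta> (\<phi> x) = x) \<and> (\<forall>\<^sub>F x in nhds 0. \<phi> (\<theta> x) = x)"

end

(*
  The n-th term is T^(n+1) lam for the weighted composition operator T f = alpha * (f o sigma).
  As theta is C^1 with theta 0 = 0, sigma = theta^4 is C^1 with sigma 0 = sigma' 0 = 0, so near 0
  it halves distances and |sigma'| <= 1. Under T the weighted C^1 size c |f| + |f'| is multiplied
  at most by a constant, and it is halved near 0, where alpha is small because alpha 0 = 0.
  Every point of [-r, r] is driven into that neighbourhood by finitely many iterations of sigma,
  so the terms and their derivatives decay like 2^-n uniformly on [-r, r], and the Weierstrass
  M-test gives convergence and C^1 regularity of the sum. Flatness of b - 1 is only used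
  through b 0 = 1, and of the conditions on alpha and lam only alpha, lam in C^1 and
  alpha 0 = 0 are needed.
*)

theory Submission
  imports Defs "HOL-Complex_Analysis.Conformal_Mappings"
begin

lemma C1_on_has_real_derivative:
  "open S \<Longrightarrow> C1_on S f \<Longrightarrow> x \<in> S \<Longrightarrow> (f has_real_derivative deriv f x) (at x)"
  unfolding C1_on_def
  by (metis DERIV_deriv_iff_real_differentiable at_within_open differentiable_on_def)

lemma C1_on_open_iff:
  assumes "open S"
  shows "C1_on S f \<longleftrightarrow>
           (\<exists>f'. (\<forall>x\<in>S. (f has_real_derivative f' x) (at x)) \<and> continuous_on S f')"
proof
  assume "C1_on S f"
  then have "(f has_real_derivative deriv f x) (at x)" if "x \<in> S" for x
    using C1_on_has_real_derivative[OF assms] that by blast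
  with \<open>C1_on S f\<close> show "\<exists>f'. (\<forall>x\<in>S. (f has_real_derivative f' x) (at x)) \<and> continuous_on S f'"
    unfolding C1_on_def by blast
next
  assume "\<exists>f'. (\<forall>x\<in>S. (f has_real_derivative f' x) (at x)) \<and> continuous_on S f'"
  then obtain f' where f': "\<And>x. x \<in> S \<Longrightarrow> (f has_real_derivative f' x) (at x)"
    and "continuous_on S f'" by blast
  then have "continuous_on S (deriv f)"
    by (metis DERIV_imp_deriv continuous_on_eq)
  moreover have "f differentiable_on S"
    using f' by (meson differentiable_at_imp_differentiable_on real_differentiable_def)
  ultimately show "C1_on S f" unfolding C1_on_def by blast
qed

lemma C1_on_imp_continuous_on: "C1_on S f \<Longrightarrow> continuous_on S f"
  unfolding C1_on_def by (simp add: differentiable_imp_continuous_on)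

lemma C1_on_subset: "C1_on S f \<Longrightarrow> T \<subseteq> S \<Longrightarrow> C1_on T f"
  unfolding C1_on_def by (meson continuous_on_subset differentiable_on_subset)

lemma C1_on_locally:
  assumes "\<And>x. x \<in> S \<Longrightarrow> \<exists>T. open T \<and> x \<in> T \<and> T \<subseteq> S \<and> C1_on T f"
  shows "C1_on S f"
  unfolding C1_on_def
proof
  show "f differentiable_on S"
    unfolding differentiable_on_def
    by (metis assms C1_on_def at_within_open differentiable_at_withinI differentiable_on_def)
  show "continuous_on S (deriv f)"
    by (metis assms C1_on_def continuous_at_imp_continuous_on continuous_on_eq_continuous_at)
qed

lemma smooth_on_imp_C1_on:
  assumes "smooth_on S f"
  shows "C1_on S f"
proof -
  have "f differentiable_on S" "deriv f differentiable_on S"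
    using assms[unfolded smooth_on_def, THEN spec, of 0] assms[unfolded smooth_on_def, THEN spec, of 1]
    by simp_all
  then show ?thesis unfolding C1_on_def by (simp add: differentiable_imp_continuous_on)
qed

lemma inverse_germ_neighbourhoods:
  assumes "open S" "0 \<in> S" "isCont (deriv \<phi>) 0" "deriv \<phi> 0 \<noteq> 0" "inverse_germ \<theta> \<phi>"
  obtains B \<delta> where "open B" "\<delta> > 0"
    "\<And>t. t \<in> B \<Longrightarrow> t \<in> S \<and> \<theta> (\<phi> t) = t \<and> deriv \<phi> t \<noteq> 0"
    "\<And>y. y \<in> ball 0 \<delta> \<Longrightarrow> \<theta> y \<in> B \<and> \<phi> (\<theta> y) = y"
proof -
  have "\<theta> 0 = 0" "(\<theta> \<longlongrightarrow> \<theta> 0) (nhds 0)"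
    and "\<forall>\<^sub>F t in nhds 0. \<theta> (\<phi> t) = t" "\<forall>\<^sub>F y in nhds 0. \<phi> (\<theta> y) = y"
    using assms(5) unfolding inverse_germ_def isCont_def tendsto_at_iff_tendsto_nhds by blast+
  moreover have "\<forall>\<^sub>F t in nhds 0. deriv \<phi> t \<noteq> 0"
    using assms(3,4) by (intro tendsto_imp_eventually_ne) (simp_all add: isCont_def tendsto_at_iff_tendsto_nhds)
  ultimately have "\<forall>\<^sub>F t in nhds 0. t \<in> S \<and> \<theta> (\<phi> t) = t \<and> deriv \<phi> t \<noteq> 0"
    using eventually_nhds_in_open[OF assms(1,2)] by (intro eventually_conj)
  then obtain B where B: "open B" "0 \<in> B"
    and B_inv: "\<And>t. t \<in> B \<Longrightarrow> t \<in> S \<and> \<theta> (\<phi> t) = t \<and> deriv \<phi> t \<noteq> 0"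
    unfolding eventually_nhds by blast
  have "\<forall>\<^sub>F y in nhds 0. \<theta> y \<in> B"
    using topological_tendstoD[OF \<open>(\<theta> \<longlongrightarrow> \<theta> 0) (nhds 0)\<close> B(1)] B(2) \<open>\<theta> 0 = 0\<close> by simp
  with \<open>\<forall>\<^sub>F y in nhds 0. \<phi> (\<theta> y) = y\<close>
  have "\<forall>\<^sub>F y in nhds 0. \<theta> y \<in> B \<and> \<phi> (\<theta> y) = y"
    by (intro eventually_conj)
  then obtain \<delta> where "\<delta> > 0" and "\<And>y. y \<in> ball 0 \<delta> \<Longrightarrow> \<theta> y \<in> B \<and> \<phi> (\<theta> y) = y"
    unfolding eventually_nhds_metric ball_def by (auto simp: dist_commute)
  with B(1) B_inv show ?thesis using that by blast
qed

lemma C1_on_inverse_germ: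
  assumes "open S" "0 \<in> S" "C1_on S \<phi>" "deriv \<phi> 0 \<noteq> 0" "inverse_germ \<theta> \<phi>"
  shows "\<exists>\<delta>>0. C1_on {-\<delta><..<\<delta>} \<theta>"
proof -
  have "isCont (deriv \<phi>) 0"
    using assms(1-3) unfolding C1_on_def by (simp add: continuous_on_eq_continuous_at)
  then obtain B \<delta> where "open B" "\<delta> > 0"
    and B_inv: "\<And>t. t \<in> B \<Longrightarrow> t \<in> S \<and> \<theta> (\<phi> t) = t \<and> deriv \<phi> t \<noteq> 0"
    and \<delta>: "\<And>y. y \<in> ball 0 \<delta> \<Longrightarrow> \<theta> y \<in> B \<and> \<phi> (\<theta> y) = y"
    using inverse_germ_neighbourhoods[OF assms(1,2) _ assms(4,5)] by blast
  have \<phi>_deriv: "(\<phi> has_real_derivative deriv \<phi> t) (at t)" if "t \<in> B" for t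
    using C1_on_has_real_derivative assms(1,3) that B_inv by blast
  then have "continuous_on B \<phi>"
    by (rule has_real_derivative_imp_continuous_on)
  have \<theta>_deriv: "(\<theta> has_real_derivative inverse (deriv \<phi> (\<theta> y))) (at y)" if "y \<in> ball 0 \<delta>" for y
    using \<delta>[OF that] B_inv \<phi>_deriv
    by (intro has_field_derivative_inverse_strong_x[OF _ _ \<open>open B\<close> \<open>continuous_on B \<phi>\<close>]) auto
  then have "continuous_on (ball 0 \<delta>) \<theta>"
    by (rule has_real_derivative_imp_continuous_on)
  have \<theta>_ball: "\<theta> y \<in> S \<and> deriv \<phi> (\<theta> y) \<noteq> 0" if "y \<in> ball 0 \<delta>" for y
    using \<delta>[OF that] B_inv by blast
  have "continuous_on S (deriv \<phi>)"
    using assms(3) unfolding C1_on_def by blast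
  then have "continuous_on (ball 0 \<delta>) (\<lambda>y. deriv \<phi> (\<theta> y))"
    using \<open>continuous_on (ball 0 \<delta>) \<theta>\<close> by (rule continuous_on_compose2) (use \<theta>_ball in blast)
  then have "continuous_on (ball 0 \<delta>) (\<lambda>y. inverse (deriv \<phi> (\<theta> y)))"
    using \<theta>_ball by (intro continuous_on_inverse) auto
  with \<theta>_deriv have "C1_on (ball 0 \<delta>) \<theta>"
    unfolding C1_on_open_iff[OF open_ball] by (intro exI[of _ "\<lambda>y. inverse (deriv \<phi> (\<theta> y))"]) blast
  then show ?thesis
    using \<open>\<delta> > 0\<close> by (intro exI[of _ \<delta>]) (simp add: ball_eq_greaterThanLessThan)
qed

lemma C1_on_power:
  assumes "open S" "C1_on S f"
  shows "C1_on S (\<lambda>x. f x ^ n)"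
proof -
  have "continuous_on S f" "continuous_on S (deriv f)"
    using assms(2) C1_on_imp_continuous_on unfolding C1_on_def by blast+
  then have "continuous_on S (\<lambda>x. of_nat n * (deriv f x * f x ^ (n - 1)))"
    by (intro continuous_intros)
  moreover have "((\<lambda>x. f x ^ n) has_real_derivative of_nat n * (deriv f x * f x ^ (n - 1))) (at x)"
    if "x \<in> S" for x
    using DERIV_power[OF C1_on_has_real_derivative[OF assms that]] by simp
  ultimately show ?thesis
    unfolding C1_on_open_iff[OF assms(1)] by (intro exI[of _ "\<lambda>x. of_nat n * (deriv f x * f x ^ (n - 1))"]) blast
qed

lemma inverse_germ_times_C1_on:
  assumes "open S" "0 \<in> S" "C1_on S b" "b 0 \<noteq> 0" "inverse_germ \<theta> (\<lambda>t. t * b t)"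
  shows "\<exists>\<delta>>0. C1_on {-\<delta><..<\<delta>} \<theta>"
proof (rule C1_on_inverse_germ[OF assms(1,2) _ _ assms(5)])
  have "continuous_on S b" "continuous_on S (deriv b)"
    using assms(3) C1_on_imp_continuous_on unfolding C1_on_def by blast+
  then have "continuous_on S (\<lambda>t. b t + t * deriv b t)"
    by (intro continuous_intros)
  moreover have \<phi>_deriv: "((\<lambda>t. t * b t) has_real_derivative b t + t * deriv b t) (at t)" if "t \<in> S" for t
    using DERIV_mult[OF DERIV_ident C1_on_has_real_derivative[OF assms(1,3) that]]
    by (simp add: mult.commute)
  ultimately show "C1_on S (\<lambda>t. t * b t)"
    unfolding C1_on_open_iff[OF assms(1)] by (intro exI[of _ "\<lambda>t. b t + t * deriv b t"]) blast
  show "deriv (\<lambda>t. t * b t) 0 \<noteq> 0"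
    using DERIV_imp_deriv[OF \<phi>_deriv[OF assms(2)]] assms(4) by simp
qed

lemma C1_on_suminf:
  fixes f :: "nat \<Rightarrow> real \<Rightarrow> real"
  assumes "open T" "convex T" "\<And>n. C1_on T (f n)"
    and f_le: "\<And>n x. x \<in> T \<Longrightarrow> \<bar>f n x\<bar> \<le> M n"
    and deriv_le: "\<And>n x. x \<in> T \<Longrightarrow> \<bar>deriv (f n) x\<bar> \<le> N n"
    and "summable M" "summable N"
  shows "(\<forall>x\<in>T. summable (\<lambda>n. f n x)) \<and> C1_on T (\<lambda>x. \<Sum>n. f n x)"
proof -
  have f_deriv: "(f n has_field_derivative deriv (f n) x) (at x within T)" if "x \<in> T" for n x
    using C1_on_has_real_derivative[OF assms(1,3) that] by (rule has_field_derivative_at_within)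
  have summable: "summable (\<lambda>n. f n x)" if "x \<in> T" for x
    by (rule summable_comparison_test'[OF \<open>summable M\<close>, of 0]) (simp add: f_le[OF that])
  have "uniformly_convergent_on T (\<lambda>n x. \<Sum>i<n. deriv (f i) x)"
    by (rule Weierstrass_m_test'[OF _ \<open>summable N\<close>]) (simp add: deriv_le)
  then have deriv_sum: "((\<lambda>x. \<Sum>n. f n x) has_real_derivative (\<Sum>n. deriv (f n) x)) (at x)"
    if "x \<in> T" for x
    using has_field_derivative_series'(2)[OF \<open>convex T\<close> f_deriv _ that summable[OF that]]
      interior_open[OF \<open>open T\<close>] that by simp
  have "uniform_limit T (\<lambda>n x. \<Sum>i<n. deriv (f i) x) (\<lambda>x. \<Sum>i. deriv (f i) x) sequentially"
    by (rule Weierstrass_m_test[OF _ \<open>summable N\<close>]) (simp add: deriv_le)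
  then have "continuous_on T (\<lambda>x. \<Sum>n. deriv (f n) x)"
  proof (rule uniform_limit_theorem[rotated])
    show "\<forall>\<^sub>F n in sequentially. continuous_on T (\<lambda>x. \<Sum>i<n. deriv (f i) x)"
      using assms(3) unfolding C1_on_def by (intro always_eventually allI continuous_on_sum) blast
  qed simp
  with deriv_sum have "C1_on T (\<lambda>x. \<Sum>n. f n x)"
    unfolding C1_on_open_iff[OF \<open>open T\<close>] by (intro exI[of _ "\<lambda>x. \<Sum>n. deriv (f n) x"]) blast
  with summable show ?thesis by blast
qed

lemma C1_on_abs_le_linear:
  assumes "open S" "convex K" "K \<subseteq> S" "0 \<in> K" "C1_on S f" "f 0 = 0"
    and "\<And>z. z \<in> K \<Longrightarrow> \<bar>deriv f z\<bar> \<le> B" "y \<in> K"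
  shows "\<bar>f y\<bar> \<le> B * \<bar>y\<bar>"
proof -
  have "norm (f y - f 0) \<le> B * norm (y - 0)"
  proof (rule field_differentiable_bound[OF assms(2) _ _ assms(8,4)])
    show "(f has_field_derivative deriv f z) (at z within K)" if "z \<in> K" for z
      using C1_on_has_real_derivative[OF assms(1,5)] that assms(3)
      by (blast intro: has_field_derivative_at_within)
  qed (simp add: assms(7))
  then show ?thesis using assms(6) by simp
qed

lemma continuous_on_abs_bound:
  fixes g :: "real \<Rightarrow> real"
  assumes "continuous_on S g" "{-r..r} \<subseteq> S"
  obtains B where "0 \<le> B" "\<And>y. \<bar>y\<bar> \<le> r \<Longrightarrow> \<bar>g y\<bar> \<le> B"
proof -
  obtain B where "0 \<le> B" "\<And>y. y \<in> {-r..r} \<Longrightarrow> norm (g y) \<le> B"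
    using continuous_on_compact_bound[OF compact_Icc continuous_on_subset[OF assms]] by blast
  then show ?thesis using that by (simp add: abs_le_iff)
qed

lemma C1_on_halving_near_0:
  assumes "open T" "0 \<in> T" "C1_on T \<sigma>" "\<sigma> 0 = 0" "deriv \<sigma> 0 = 0"
  shows "\<exists>e>0. {-e<..<e} \<subseteq> T \<and> (\<forall>y\<in>{-e<..<e}. \<bar>deriv \<sigma> y\<bar> \<le> 1/2 \<and> \<bar>\<sigma> y\<bar> \<le> \<bar>y\<bar> / 2)"
proof -
  have "isCont (deriv \<sigma>) 0"
    using assms(1-3) unfolding C1_on_def by (simp add: continuous_on_eq_continuous_at)
  then have "((\<lambda>y. \<bar>deriv \<sigma> y\<bar>) \<longlongrightarrow> 0) (nhds 0)"
    using assms(5) unfolding isCont_def tendsto_at_iff_tendsto_nhds by (metis tendsto_rabs_zero)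
  then have "\<forall>\<^sub>F y in nhds 0. \<bar>deriv \<sigma> y\<bar> < 1/2"
    by (rule order_tendstoD) simp
  with eventually_nhds_in_open[OF assms(1,2)]
  have "\<forall>\<^sub>F y in nhds 0. y \<in> T \<and> \<bar>deriv \<sigma> y\<bar> < 1/2"
    by (intro eventually_conj)
  then obtain e where "e > 0" and e: "\<And>y. y \<in> ball 0 e \<Longrightarrow> y \<in> T \<and> \<bar>deriv \<sigma> y\<bar> < 1/2"
    unfolding eventually_nhds_metric ball_def by (auto simp: dist_commute)
  have "\<bar>\<sigma> y\<bar> \<le> 1/2 * \<bar>y\<bar>" if "y \<in> ball 0 e" for y
    using e \<open>e > 0\<close> that
    by (intro C1_on_abs_le_linear[OF assms(1) convex_ball[of 0 e] _ _ assms(3,4)]) (auto intro: less_imp_le)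
  with e \<open>e > 0\<close> show ?thesis
    by (intro exI[of _ e]) (auto simp: ball_eq_greaterThanLessThan less_imp_le)
qed

lemma inverse_germ_fourth_power_contracts:
  assumes "open S" "0 \<in> S" "C1_on S b" "b 0 \<noteq> 0" "inverse_germ \<theta> (\<lambda>t. t * b t)"
  shows "\<exists>e>0. C1_on {-e<..<e} (\<lambda>x. \<theta> x ^ 4) \<and>
           (\<forall>y. \<bar>y\<bar> < e \<longrightarrow> \<bar>\<theta> y ^ 4\<bar> \<le> \<bar>y\<bar> / 2 \<and> \<bar>deriv (\<lambda>x. \<theta> x ^ 4) y\<bar> \<le> 1)"
proof -
  obtain \<delta> where "\<delta> > 0" and C1_\<theta>: "C1_on {-\<delta><..<\<delta>} \<theta>"
    using inverse_germ_times_C1_on[OF assms] by blast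
  define \<sigma> where "\<sigma> = (\<lambda>x. \<theta> x ^ 4)"
  have C1_\<sigma>: "C1_on {-\<delta><..<\<delta>} \<sigma>"
    unfolding \<sigma>_def by (rule C1_on_power[OF _ C1_\<theta>]) simp
  have "\<theta> 0 = 0" using assms(5) unfolding inverse_germ_def by blast
  have "(\<sigma> has_real_derivative 4 * (deriv \<theta> 0 * \<theta> 0 ^ 3)) (at 0)"
    using DERIV_power[OF C1_on_has_real_derivative[OF _ C1_\<theta>], of 0 4] \<open>\<delta> > 0\<close>
    by (simp add: \<sigma>_def)
  then have "deriv \<sigma> 0 = 0" "\<sigma> 0 = 0"
    using \<open>\<theta> 0 = 0\<close> DERIV_imp_deriv by (auto simp: \<sigma>_def)
  then obtain e where "e > 0" "{-e<..<e} \<subseteq> {-\<delta><..<\<delta>}"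
    and \<sigma>: "\<And>y. y \<in> {-e<..<e} \<Longrightarrow> \<bar>deriv \<sigma> y\<bar> \<le> 1/2 \<and> \<bar>\<sigma> y\<bar> \<le> \<bar>y\<bar> / 2"
    using C1_on_halving_near_0[OF _ _ C1_\<sigma>] \<open>\<delta> > 0\<close> by auto
  have "\<bar>\<sigma> y\<bar> \<le> \<bar>y\<bar> / 2 \<and> \<bar>deriv \<sigma> y\<bar> \<le> 1" if "\<bar>y\<bar> < e" for y
    using \<sigma>[of y] that by (auto simp: abs_less_iff)
  moreover have "C1_on {-e<..<e} \<sigma>"
    using C1_\<sigma> \<open>{-e<..<e} \<subseteq> _\<close> by (rule C1_on_subset)
  ultimately show ?thesis
    using \<open>e > 0\<close> unfolding \<sigma>_def by blast
qed

lemma halving_decay: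
  fixes W :: "nat \<Rightarrow> real \<Rightarrow> real" and \<sigma> :: "real \<Rightarrow> real"
  assumes halving: "\<And>y. \<bar>y\<bar> \<le> \<rho> \<Longrightarrow> \<bar>\<sigma> y\<bar> \<le> \<bar>y\<bar> / 2"
    and W0: "\<And>y. \<bar>y\<bar> \<le> \<rho> \<Longrightarrow> W 0 y \<le> B"
    and decay: "\<And>n y. \<bar>y\<bar> \<le> \<rho> \<Longrightarrow> W (Suc n) y \<le> W n (\<sigma> y) / 2"
    and "\<bar>y\<bar> \<le> \<rho>"
  shows "W n y \<le> B / 2^n"
  using \<open>\<bar>y\<bar> \<le> \<rho>\<close>
proof (induction n arbitrary: y)
  case 0
  then show ?case using W0 by simp
next
  case (Suc n)
  have "\<bar>\<sigma> y\<bar> \<le> \<rho>" using halving[OF Suc.prems] Suc.prems by linarith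
  then show ?case using decay[OF Suc.prems, of n] Suc.IH[of "\<sigma> y"] by simp
qed

lemma geometric_decay_extends:
  fixes W :: "nat \<Rightarrow> real \<Rightarrow> real" and \<sigma> :: "real \<Rightarrow> real"
  assumes "0 < \<rho>" "\<rho> \<le> r" "0 \<le> K" "0 \<le> B"
    and halving: "\<And>y. \<bar>y\<bar> \<le> r \<Longrightarrow> \<bar>\<sigma> y\<bar> \<le> \<bar>y\<bar> / 2"
    and W0: "\<And>y. \<bar>y\<bar> \<le> r \<Longrightarrow> W 0 y \<le> B"
    and growth: "\<And>n y. \<bar>y\<bar> \<le> r \<Longrightarrow> W (Suc n) y \<le> K * W n (\<sigma> y)"
    and decay: "\<And>n y. \<bar>y\<bar> \<le> \<rho> \<Longrightarrow> W (Suc n) y \<le> W n (\<sigma> y) / 2"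
  shows "\<exists>M. \<forall>n y. \<bar>y\<bar> \<le> r \<longrightarrow> W n y \<le> M / 2^n"
proof -
  define C where "C = max 1 (2 * K)"
  have "1 \<le> C" by (simp add: C_def)
  \<comment> \<open>one step of \<sigma> maps the layer \<open>\<bar>y\<bar> \<le> \<rho> * 2^(j+1)\<close> into the layer below, at the price of a factor C\<close>
  have layer: "W n y \<le> B * C^j / 2^n" if "\<bar>y\<bar> \<le> r" "\<bar>y\<bar> \<le> \<rho> * 2^j" for j n y
    using that
  proof (induction j arbitrary: n y)
    case 0
    then show ?case using halving_decay[of \<rho> \<sigma> W B] halving W0 decay \<open>\<rho> \<le> r\<close> by simp
  next
    case (Suc j)
    show ?case
    proof (cases n)
      case 0
      have "B \<le> B * C ^ Suc j"
        using \<open>0 \<le> B\<close> one_le_power[OF \<open>1 \<le> C\<close>] by (metis mult_left_mono mult.right_neutral)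
      then show ?thesis using W0[OF Suc.prems(1)] 0 by simp
    next
      case (Suc m)
      have "\<bar>\<sigma> y\<bar> \<le> r" "\<bar>\<sigma> y\<bar> \<le> \<rho> * 2^j"
        using halving[OF \<open>\<bar>y\<bar> \<le> r\<close>] \<open>\<bar>y\<bar> \<le> \<rho> * 2 ^ Suc j\<close> \<open>\<bar>y\<bar> \<le> r\<close> by auto
      then have "W (Suc m) y \<le> K * (B * C^j / 2^m)"
        using growth[OF \<open>\<bar>y\<bar> \<le> r\<close>, of m] Suc.IH \<open>0 \<le> K\<close> by (meson mult_left_mono order_trans)
      also have "\<dots> = (2 * K) * (B * C^j) / 2^Suc m" by simp
      also have "\<dots> \<le> C * (B * C^j) / 2^Suc m"
        using \<open>0 \<le> B\<close> by (intro divide_right_mono mult_right_mono) (auto simp: C_def)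
      finally show ?thesis using Suc by (simp add: ac_simps)
    qed
  qed
  obtain j where "r / \<rho> < 2^j" using real_arch_pow[of 2 "r / \<rho>"] by auto
  then have "r \<le> \<rho> * 2^j" using \<open>0 < \<rho>\<close> by (simp add: field_simps)
  then show ?thesis using layer by (meson order_trans)
qed

definition wcomp :: "(real \<Rightarrow> real) \<Rightarrow> (real \<Rightarrow> real) \<Rightarrow> (real \<Rightarrow> real) \<Rightarrow> real \<Rightarrow> real"
  where "wcomp a \<sigma> f y = a y * f (\<sigma> y)"

lemma wcomp_funpow_eq_prod:
  "(wcomp a \<sigma> ^^ Suc n) f x = (\<Prod>k\<le>n. a ((\<sigma> ^^ k) x)) * f ((\<sigma> ^^ Suc n) x)"
proof (induction n arbitrary: x)
  case 0
  then show ?case by (simp add: wcomp_def)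
next
  case (Suc n)
  have "(wcomp a \<sigma> ^^ Suc (Suc n)) f x = a x * (wcomp a \<sigma> ^^ Suc n) f (\<sigma> x)"
    by (simp add: wcomp_def)
  also have "\<dots> = a x * ((\<Prod>k\<le>n. a ((\<sigma> ^^ Suc k) x)) * f ((\<sigma> ^^ Suc (Suc n)) x))"
    unfolding Suc.IH by (simp only: funpow_Suc_right comp_def)
  also have "\<dots> = (\<Prod>k\<le>Suc n. a ((\<sigma> ^^ k) x)) * f ((\<sigma> ^^ Suc (Suc n)) x)"
    by (simp only: prod.atMost_Suc_shift funpow_0 mult.assoc)
  finally show ?case .
qed

lemma has_real_derivative_wcomp:
  assumes "open S" "\<sigma> ` S \<subseteq> S" "C1_on S a" "C1_on S \<sigma>" "C1_on S f" "y \<in> S"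
  shows "(wcomp a \<sigma> f has_real_derivative
            deriv a y * f (\<sigma> y) + a y * (deriv f (\<sigma> y) * deriv \<sigma> y)) (at y)"
proof -
  have "\<sigma> y \<in> S" using assms(2,6) by blast
  have a': "(a has_real_derivative deriv a y) (at y)"
    using C1_on_has_real_derivative[OF assms(1,3,6)] .
  have "((\<lambda>y. f (\<sigma> y)) has_real_derivative deriv f (\<sigma> y) * deriv \<sigma> y) (at y)"
    using C1_on_has_real_derivative[OF assms(1,5) \<open>\<sigma> y \<in> S\<close>] C1_on_has_real_derivative[OF assms(1,4,6)]
    by (rule DERIV_chain2)
  from DERIV_mult[OF a' this] show ?thesis
    unfolding wcomp_def by (simp add: ac_simps)
qed

lemma C1_on_wcomp:
  assumes "open S" "\<sigma> ` S \<subseteq> S" "C1_on S a" "C1_on S \<sigma>" "C1_on S f"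
  shows "C1_on S (wcomp a \<sigma> f)"
proof -
  have a: "continuous_on S a" "continuous_on S (deriv a)"
    and \<sigma>: "continuous_on S \<sigma>" "continuous_on S (deriv \<sigma>)"
    and f: "continuous_on S f" "continuous_on S (deriv f)"
    using assms(3-5) C1_on_imp_continuous_on unfolding C1_on_def by blast+
  have "continuous_on S (\<lambda>y. f (\<sigma> y))" "continuous_on S (\<lambda>y. deriv f (\<sigma> y))"
    using continuous_on_compose2[OF f(1) \<sigma>(1) assms(2)] continuous_on_compose2[OF f(2) \<sigma>(1) assms(2)] .
  with a \<sigma> have "continuous_on S (\<lambda>y. deriv a y * f (\<sigma> y) + a y * (deriv f (\<sigma> y) * deriv \<sigma> y))"
    by (intro continuous_on_add continuous_on_mult)
  with has_real_derivative_wcomp[OF assms] show ?thesis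
    unfolding C1_on_open_iff[OF assms(1)]
    by (intro exI[of _ "\<lambda>y. deriv a y * f (\<sigma> y) + a y * (deriv f (\<sigma> y) * deriv \<sigma> y)"]) blast
qed

locale weighted_composition_series =
  fixes e :: real and \<sigma> a l :: "real \<Rightarrow> real"
  assumes e_pos: "0 < e"
    and C1_\<sigma>: "C1_on {-e<..<e} \<sigma>"
    and halving: "\<And>y. \<bar>y\<bar> < e \<Longrightarrow> \<bar>\<sigma> y\<bar> \<le> \<bar>y\<bar> / 2"
    and deriv_\<sigma>_le: "\<And>y. \<bar>y\<bar> < e \<Longrightarrow> \<bar>deriv \<sigma> y\<bar> \<le> 1"
    and C1_a: "C1_on {-e<..<e} a"
    and a_0: "a 0 = 0"
    and C1_l: "C1_on {-e<..<e} l"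
begin

definition u :: "nat \<Rightarrow> real \<Rightarrow> real"
  where "u n = (wcomp a \<sigma> ^^ Suc n) l"

lemma \<sigma>_maps_into: "\<sigma> ` {-e<..<e} \<subseteq> {-e<..<e}"
  using halving e_pos by (fastforce simp: abs_less_iff)

lemma u_Suc: "u (Suc n) y = a y * u n (\<sigma> y)"
  by (simp add: u_def wcomp_def)

lemma C1_u: "C1_on {-e<..<e} (u n)"
proof (induction n)
  case 0
  show ?case using C1_on_wcomp[OF _ \<sigma>_maps_into C1_a C1_\<sigma> C1_l] by (simp add: u_def)
next
  case (Suc n)
  show ?case using C1_on_wcomp[OF _ \<sigma>_maps_into C1_a C1_\<sigma> Suc.IH] by (simp add: u_def)
qed

lemma deriv_u_Suc:
  assumes "\<bar>y\<bar> < e"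
  shows "deriv (u (Suc n)) y = deriv a y * u n (\<sigma> y) + a y * (deriv (u n) (\<sigma> y) * deriv \<sigma> y)"
  using has_real_derivative_wcomp[OF _ \<sigma>_maps_into C1_a C1_\<sigma> C1_u, of y n] assms
  by (intro DERIV_imp_deriv) (simp add: u_def abs_less_iff)

definition u_norm :: "real \<Rightarrow> nat \<Rightarrow> real \<Rightarrow> real"
  where "u_norm c n y = c * \<bar>u n y\<bar> + \<bar>deriv (u n) y\<bar>"

lemma u_norm_Suc_le:
  assumes "\<bar>y\<bar> < e" "0 \<le> c"
  shows "u_norm c (Suc n) y
           \<le> (c * \<bar>a y\<bar> + \<bar>deriv a y\<bar>) * \<bar>u n (\<sigma> y)\<bar> + \<bar>a y\<bar> * \<bar>deriv (u n) (\<sigma> y)\<bar>"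
proof -
  have "\<bar>deriv (u n) (\<sigma> y)\<bar> * \<bar>deriv \<sigma> y\<bar> \<le> \<bar>deriv (u n) (\<sigma> y)\<bar>"
    using deriv_\<sigma>_le[OF assms(1)] by (simp add: mult_right_le_one_le)
  then have "\<bar>a y * (deriv (u n) (\<sigma> y) * deriv \<sigma> y)\<bar> \<le> \<bar>a y\<bar> * \<bar>deriv (u n) (\<sigma> y)\<bar>"
    by (simp add: abs_mult mult_left_mono)
  then show ?thesis
    unfolding u_norm_def u_Suc deriv_u_Suc[OF assms(1)] using assms(2)
    by (simp add: abs_mult distrib_right abs_triangle_ineq[THEN order_trans] mult.assoc)
qed

lemma u_norm_Suc_growth:
  assumes "\<bar>y\<bar> < e" "1 \<le> c" "\<bar>a y\<bar> \<le> A" "\<bar>deriv a y\<bar> \<le> A'"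
  shows "u_norm c (Suc n) y \<le> (A + A') * u_norm c n (\<sigma> y)"
proof -
  have "c * \<bar>a y\<bar> \<le> c * A"
    using assms(2,3) by (intro mult_left_mono) auto
  moreover have "\<bar>deriv a y\<bar> \<le> c * A'"
    using mult_right_mono[OF assms(2), of A'] assms(4) by force
  ultimately have "c * \<bar>a y\<bar> + \<bar>deriv a y\<bar> \<le> (A + A') * c"
    by (simp add: algebra_simps)
  then have "(c * \<bar>a y\<bar> + \<bar>deriv a y\<bar>) * \<bar>u n (\<sigma> y)\<bar> \<le> (A + A') * c * \<bar>u n (\<sigma> y)\<bar>"
    by (rule mult_right_mono) simp
  moreover have "\<bar>a y\<bar> * \<bar>deriv (u n) (\<sigma> y)\<bar> \<le> (A + A') * \<bar>deriv (u n) (\<sigma> y)\<bar>"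
    using assms(3,4) by (intro mult_right_mono) auto
  ultimately show ?thesis
    using u_norm_Suc_le[OF assms(1), of c n] assms(2) unfolding u_norm_def by (simp add: algebra_simps)
qed

lemma u_norm_Suc_contraction:
  assumes "\<bar>y\<bar> < e" "0 \<le> c" "\<bar>a y\<bar> \<le> 1/4" "\<bar>deriv a y\<bar> \<le> c/4"
  shows "u_norm c (Suc n) y \<le> u_norm c n (\<sigma> y) / 2"
proof -
  have "c * \<bar>a y\<bar> \<le> c / 4" using mult_left_mono[OF assms(3,2)] by simp
  then have "(c * \<bar>a y\<bar> + \<bar>deriv a y\<bar>) * \<bar>u n (\<sigma> y)\<bar> \<le> c / 2 * \<bar>u n (\<sigma> y)\<bar>"
    using assms(4) by (intro mult_right_mono) auto
  moreover have "\<bar>a y\<bar> * \<bar>deriv (u n) (\<sigma> y)\<bar> \<le> 1/2 * \<bar>deriv (u n) (\<sigma> y)\<bar>"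
    using assms(3) by (intro mult_right_mono) auto
  ultimately show ?thesis
    using u_norm_Suc_le[OF assms(1,2), of n] unfolding u_norm_def by (simp add: algebra_simps)
qed

lemma abs_u_le_u_norm:
  assumes "1 \<le> c"
  shows "\<bar>u n y\<bar> \<le> u_norm c n y" "\<bar>deriv (u n) y\<bar> \<le> u_norm c n y"
proof -
  have "\<bar>u n y\<bar> \<le> c * \<bar>u n y\<bar>"
    using mult_right_mono[OF assms, of "\<bar>u n y\<bar>"] by simp
  then show "\<bar>u n y\<bar> \<le> u_norm c n y" "\<bar>deriv (u n) y\<bar> \<le> u_norm c n y"
    using assms unfolding u_norm_def by auto
qed

lemma u_norm_geometric_bound:
  assumes "0 < r" "r < e"
  shows "\<exists>c M. 1 \<le> c \<and> (\<forall>n y. \<bar>y\<bar> \<le> r \<longrightarrow> u_norm c n y \<le> M / 2^n)"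
proof -
  have r_e: "{-r..r} \<subseteq> {-e<..<e}" and r_lt: "\<And>y. \<bar>y\<bar> \<le> r \<Longrightarrow> \<bar>y\<bar> < e"
    using assms by auto
  obtain A where "0 \<le> A" and A: "\<And>y. \<bar>y\<bar> \<le> r \<Longrightarrow> \<bar>a y\<bar> \<le> A"
    using continuous_on_abs_bound[OF C1_on_imp_continuous_on[OF C1_a] r_e] by blast
  obtain A' where "0 \<le> A'" and A': "\<And>y. \<bar>y\<bar> \<le> r \<Longrightarrow> \<bar>deriv a y\<bar> \<le> A'"
    using continuous_on_abs_bound[OF C1_a[unfolded C1_on_def, THEN conjunct2] r_e] by blast
  \<comment> \<open>\<open>\<bar>deriv a\<bar> \<le> c/4\<close>, so that \<open>u_norm c\<close> is halved wherever \<open>\<bar>a\<bar> \<le> 1/4\<close>\<close>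
  define c where "c = 4 * A' + 1"
  have "1 \<le> c" "A' \<le> c / 4" using \<open>0 \<le> A'\<close> by (simp_all add: c_def)
  define \<rho> where "\<rho> = min r (1 / c)"
  have a_small: "\<bar>a y\<bar> \<le> 1/4" if "\<bar>y\<bar> \<le> \<rho>" for y
  proof -
    have "\<bar>a y\<bar> \<le> A' * \<bar>y\<bar>"
      using that A' assms by (intro C1_on_abs_le_linear[OF _ convex_real_interval(5) r_e _ C1_a a_0]) (auto simp: \<rho>_def)
    also have "\<dots> \<le> A' * (1 / c)"
      using that \<open>0 \<le> A'\<close> by (intro mult_left_mono) (auto simp: \<rho>_def)
    also have "\<dots> \<le> 1/4"
      using \<open>A' \<le> c / 4\<close> \<open>1 \<le> c\<close> by (simp add: divide_simps)
    finally show ?thesis .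
  qed
  have "continuous_on {-e<..<e} (u_norm c 0)"
    using C1_u[of 0] C1_on_imp_continuous_on unfolding u_norm_def C1_on_def
    by (intro continuous_intros) blast+
  then obtain B where "0 \<le> B" and B: "\<And>y. \<bar>y\<bar> \<le> r \<Longrightarrow> \<bar>u_norm c 0 y\<bar> \<le> B"
    using continuous_on_abs_bound[OF _ r_e] by blast
  have "\<exists>M. \<forall>n y. \<bar>y\<bar> \<le> r \<longrightarrow> u_norm c n y \<le> M / 2^n"
  proof (rule geometric_decay_extends[of \<rho> r "A + A'" B])
    show "u_norm c (Suc n) y \<le> (A + A') * u_norm c n (\<sigma> y)" if "\<bar>y\<bar> \<le> r" for n y
      using that \<open>1 \<le> c\<close> by (intro u_norm_Suc_growth r_lt A A')
    show "u_norm c (Suc n) y \<le> u_norm c n (\<sigma> y) / 2" if "\<bar>y\<bar> \<le> \<rho>" for n y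
      using that \<open>1 \<le> c\<close> \<open>A' \<le> c / 4\<close> A'[of y] r_lt[of y]
      by (intro u_norm_Suc_contraction a_small) (auto simp: \<rho>_def)
  qed (use assms \<open>1 \<le> c\<close> \<open>0 \<le> A\<close> \<open>0 \<le> A'\<close> \<open>0 \<le> B\<close> halving r_lt B in
       \<open>auto simp: \<rho>_def abs_le_iff\<close>)
  with \<open>1 \<le> c\<close> show ?thesis by blast
qed

lemma summable_u_and_C1_on_suminf:
  "(\<forall>x\<in>{-e<..<e}. summable (\<lambda>n. u n x)) \<and> C1_on {-e<..<e} (\<lambda>x. \<Sum>n. u n x)"
proof -
  have geometric: "summable (\<lambda>n. K / 2^n)" for K :: real
    using summable_mult[OF summable_geometric[of "1/2"], of K] by (simp add: power_one_over)
  have near_x: "summable (\<lambda>n. u n x) \<and>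
      (\<exists>T. open T \<and> x \<in> T \<and> T \<subseteq> {-e<..<e} \<and> C1_on T (\<lambda>x. \<Sum>n. u n x))"
    if "x \<in> {-e<..<e}" for x
  proof -
    define r where "r = (\<bar>x\<bar> + e) / 2"
    have "0 < r" "r < e" "x \<in> {-r<..<r}" using that by (auto simp: r_def abs_if field_simps)
    then obtain c M where "1 \<le> c" and M: "\<And>n y. \<bar>y\<bar> \<le> r \<Longrightarrow> u_norm c n y \<le> M / 2^n"
      using u_norm_geometric_bound by blast
    have in_r: "\<bar>y\<bar> \<le> r" if "y \<in> {-r<..<r}" for y
      using that by auto
    have "(\<forall>y\<in>{-r<..<r}. summable (\<lambda>n. u n y)) \<and> C1_on {-r<..<r} (\<lambda>y. \<Sum>n. u n y)"
    proof (rule C1_on_suminf[OF _ _ _ _ _ geometric[of M] geometric[of M]])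
      show "C1_on {-r<..<r} (u n)" for n
        using C1_u by (rule C1_on_subset) (use \<open>r < e\<close> in auto)
      show "\<bar>u n y\<bar> \<le> M / 2^n" "\<bar>deriv (u n) y\<bar> \<le> M / 2^n" if "y \<in> {-r<..<r}" for n y
        using abs_u_le_u_norm[OF \<open>1 \<le> c\<close>] M[OF in_r[OF that]] by (meson order_trans)+
    qed simp_all
    then show ?thesis using \<open>x \<in> {-r<..<r}\<close> \<open>r < e\<close> by auto
  qed
  then have "C1_on {-e<..<e} (\<lambda>x. \<Sum>n. u n x)"
    by (intro C1_on_locally) blast
  with near_x show ?thesis by blast
qed

end

theorem lemma3p11:
  fixes b \<theta> :: "real \<Rightarrow> real"
  assumes "smooth_germ b"
    and "flat_at_0 (\<lambda>t. b t - 1)"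
    and "inverse_germ \<theta> (\<lambda>t. t * b t)"
  shows "\<exists>\<epsilon>>0. \<forall>(\<alpha>::real \<Rightarrow> real) (lam::real \<Rightarrow> real).
           smooth_on {-\<epsilon><..<\<epsilon>} \<alpha> \<and> \<alpha> 0 = 0 \<and> deriv \<alpha> 0 = 0 \<and>
           C1_on {-\<epsilon><..<\<epsilon>} lam \<and> lam 0 = 0 \<and> deriv lam 0 = 0 \<longrightarrow>
           (let \<sigma> = (\<lambda>x. (\<theta> x) ^ 4);
                u = (\<lambda>x n. (\<Prod>k\<le>n. \<alpha> ((\<sigma> ^^ k) x)) * lam ((\<sigma> ^^ (Suc n)) x))
            in (\<forall>x\<in>{-\<epsilon><..<\<epsilon>}. summable (u x)) \<and>
               C1_on {-\<epsilon><..<\<epsilon>} (\<lambda>x. \<Sum>n. u x n))"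
proof -
  obtain r where "r > 0" and C1_b: "C1_on {-r<..<r} b"
    using assms(1) smooth_on_imp_C1_on unfolding smooth_germ_def by blast
  have "b 0 = 1"
    using assms(2) unfolding flat_at_0_def by (metis funpow_0 eq_iff_diff_eq_0)
  then obtain e where "e > 0" and \<sigma>: "C1_on {-e<..<e} (\<lambda>x. \<theta> x ^ 4)"
      "\<And>y. \<bar>y\<bar> < e \<Longrightarrow> \<bar>\<theta> y ^ 4\<bar> \<le> \<bar>y\<bar> / 2 \<and> \<bar>deriv (\<lambda>x. \<theta> x ^ 4) y\<bar> \<le> 1"
    using inverse_germ_fourth_power_contracts[OF _ _ C1_b _ assms(3)] \<open>r > 0\<close> by auto
  have "(\<forall>x\<in>{-e<..<e}. summable (\<lambda>n. (wcomp \<alpha> (\<lambda>x. \<theta> x ^ 4) ^^ Suc n) lam x)) \<and>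
        C1_on {-e<..<e} (\<lambda>x. \<Sum>n. (wcomp \<alpha> (\<lambda>x. \<theta> x ^ 4) ^^ Suc n) lam x)"
    if "smooth_on {-e<..<e} \<alpha>" "\<alpha> 0 = 0" "C1_on {-e<..<e} lam" for \<alpha> lam
  proof -
    interpret weighted_composition_series e "\<lambda>x. \<theta> x ^ 4" \<alpha> lam
      using \<open>e > 0\<close> \<sigma> that(2,3) smooth_on_imp_C1_on[OF that(1)] by unfold_locales blast+
    show ?thesis using summable_u_and_C1_on_suminf by (simp add: u_def)
  qed
  then show ?thesis
    using \<open>e > 0\<close> unfolding Let_def wcomp_funpow_eq_prod by blast
qed

end
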